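(* Let $f:\mathbb{N}^d\to\mathbb{N}$ satisfy: (i) $f$ is nondecreasing; (ii) there exist quilt-affine $g_1,\ldots,g_m:\mathbb{N}^d\to\mathbb{Z}$ and $\vec{n}\in\mathbb{N}^d$ such that $f(\vec{x})=\min_k g_k(\vec{x})$ for all $\vec{x}\ge\vec{n}$ componentwise; (iii) for every $i\in\{1,\ldots,d\}$ and $j\in\mathbb{N}$, the fixed-input restriction $f_{[\vec{x}(i)\to j]}$ is obliviously-computable. Then $f$ is obliviously-computable.
   Context: A chemical reaction network (CRN) is a pair $(\mathcal{S},\mathcal{R})$ of a finite set of species and a finite set of reactions $(\vec{R},\vec{P})\in\mathbb{N}^{\mathcal{S}}\times\mathbb{N}^{\mathcal{S}}$. A configuration is $\vec{C}\in\mathbb{N}^{\mathcal{S}}$; a reaction is applicable if $\vec{R}\le\vec{C}$ and yields $\vec{C}-\vec{R}+\vec{P}$; reachability is via finite sequences of applicable reactions. To compute $f:\mathbb{N}^d\to\mathbb{N}$ the CRN has input species $X_1,\ldots,X_d$, output species $Y$, leader species $L$; the initial configuration $\vec{I}_{\vec{x}}$ has $\vec{x}(i)$ copies of $X_i$, one $L$, nothing else. $\vec{C}$ is stable if all configurations reachable from it have the same count of $Y$. The CRN stably computes $f$ if for every $\vec{x}$ and every $\vec{C}$ reachable from $\vec{I}_{\vec{x}}$ some stable $\vec{O}$ reachable from $\vec{C}$ has $\vec{O}(Y)=f(\vec{x})$. The CRN is output-oblivious if $Y$ is never a reactant; $f$ is obliviously-computable if stably computed by an output-oblivious CRN. A function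 $g:\mathbb{N}^d\to\mathbb{Z}$ is quilt-affine if it is nondecreasing and there exist $p\in\mathbb{N}_+$, $\vec{\nabla}\in\mathbb{Q}^d_{\ge0}$, $B:\mathbb{Z}^d/p\mathbb{Z}^d\to\mathbb{Q}$ with $g(\vec{x})=\vec{\nabla}\cdot\vec{x}+B(\vec{x}\bmod p)$. The fixed-input restriction is $f_{[\vec{x}(i)\to j]}(\vec{x})=f(\vec{x}(1),\ldots,\vec{x}(i-1),j,\vec{x}(i+1),\ldots,\vec{x}(d))$. *)

theory Defs
  imports Complex_Main
begin

text \<open>Species are natural numbers (any finite species set can be renamed into nat).
  Vectors in N^d are lists of length d (0-based coordinates).\<close>

type_synonym config = "nat \<Rightarrow> nat"
type_synonym reaction = "config \<times> config"

definition supported_in :: "nat set \<Rightarrow> config \<Rightarrow> bool" where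
  "supported_in S C \<longleftrightarrow> (\<forall>s. s \<notin> S \<longrightarrow> C s = 0)"

definition applicable :: "reaction \<Rightarrow> config \<Rightarrow> bool" where
  "applicable r C \<longleftrightarrow> (\<forall>s. fst r s \<le> C s)"

definition apply_rxn :: "reaction \<Rightarrow> config \<Rightarrow> config" where
  "apply_rxn r C = (\<lambda>s. C s - fst r s + snd r s)"

definition step :: "reaction set \<Rightarrow> config \<Rightarrow> config \<Rightarrow> bool" where
  "step Rs C D \<longleftrightarrow> (\<exists>r\<in>Rs. applicable r C \<and> D = apply_rxn r C)"

definition reachable :: "reaction set \<Rightarrow> config \<Rightarrow> config \<Rightarrow> bool" where
  "reachable Rs = (step Rs)\<^sup>*\<^sup>*"

definition stable :: "reaction set \<Rightarrow> nat \<Rightarrow> config \<Rightarrow> bool" where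
  "stable Rs Y C \<longleftrightarrow> (\<forall>D. reachable Rs C D \<longrightarrow> D Y = C Y)"

definition initial_config :: "nat \<Rightarrow> (nat \<Rightarrow> nat) \<Rightarrow> nat \<Rightarrow> nat list \<Rightarrow> config" where
  "initial_config d X L x = (\<lambda>s. (if s = L then 1 else 0) + (\<Sum>i<d. if X i = s then x ! i else 0))"

definition stably_computes ::
  "nat set \<Rightarrow> reaction set \<Rightarrow> nat \<Rightarrow> (nat \<Rightarrow> nat) \<Rightarrow> nat \<Rightarrow> nat \<Rightarrow> (nat list \<Rightarrow> nat) \<Rightarrow> bool" where
  "stably_computes S Rs d X Y L f \<longleftrightarrow>
     finite S \<and> finite Rs \<and>
     (\<forall>r\<in>Rs. supported_in S (fst r) \<and> supported_in S (snd r)) \<and>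
     (\<forall>i<d. X i \<in> S) \<and> inj_on X {..<d} \<and> Y \<in> S \<and> L \<in> S \<and> Y \<noteq> L \<and>
     Y \<notin> X ` {..<d} \<and> L \<notin> X ` {..<d} \<and>
     (\<forall>x. length x = d \<longrightarrow>
        (\<forall>C. reachable Rs (initial_config d X L x) C \<longrightarrow>
           (\<exists>Cf. reachable Rs C Cf \<and> stable Rs Y Cf \<and> Cf Y = f x)))"

definition output_oblivious :: "reaction set \<Rightarrow> nat \<Rightarrow> bool" where
  "output_oblivious Rs Y \<longleftrightarrow> (\<forall>r\<in>Rs. fst r Y = 0)"

definition obliviously_computable :: "nat \<Rightarrow> (nat list \<Rightarrow> nat) \<Rightarrow> bool" where
  "obliviously_computable d f \<longleftrightarrow>
     (\<exists>S Rs X Y L. stably_computes S Rs d X Y L f \<and> output_oblivious Rs Y)"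

definition vle :: "nat list \<Rightarrow> nat list \<Rightarrow> bool" where
  "vle x y \<longleftrightarrow> list_all2 (\<le>) x y"

definition nondecreasing :: "nat \<Rightarrow> (nat list \<Rightarrow> 'a::order) \<Rightarrow> bool" where
  "nondecreasing d f \<longleftrightarrow>
     (\<forall>x y. length x = d \<longrightarrow> length y = d \<longrightarrow> vle x y \<longrightarrow> f x \<le> f y)"

text \<open>Quilt-affine: nondecreasing, and g x = grad . x + B (x mod p) with p > 0,
  grad \<in> Q^d_{\<ge>0}, B defined on residue vectors (represented by lists with entries < p).\<close>
definition quilt_affine :: "nat \<Rightarrow> (nat list \<Rightarrow> int) \<Rightarrow> bool" where
  "quilt_affine d g \<longleftrightarrow> nondecreasing d g \<and>
     (\<exists>p::nat. \<exists>grad::rat list. \<exists>B::nat list \<Rightarrow> rat.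
        p > 0 \<and> length grad = d \<and> (\<forall>q\<in>set grad. q \<ge> 0) \<and>
        (\<forall>x. length x = d \<longrightarrow>
           of_int (g x) = (\<Sum>i<d. grad ! i * of_nat (x ! i)) + B (map (\<lambda>v. v mod p) x)))"

definition fix_input :: "(nat list \<Rightarrow> nat) \<Rightarrow> nat \<Rightarrow> nat \<Rightarrow> nat list \<Rightarrow> nat" where
  "fix_input f i j = (\<lambda>x. f (x[i := j]))"

end

theory Submission
  imports Defs "HOL-Library.Countable"
begin

(* Below the threshold n the value of f is supplied by the obliviously computable
   restrictions f[x(i) -> j] with j < n(i); above it, f is the minimum of the quilt-affine
   functions g_k.  The composed CRN hands every input molecule X_i to a counter of the leader
   and to each restricted CRN, which all run unchanged in parallel.  The leader counts the
   inputs q it has consumed, remembering q only up to n and then modulo a common period P of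
   the increments of the g_k; this suffices to know by how much each g_k(max(q, n)) grows, and
   it releases that many budget molecules Budget k.  One output molecule is produced by
   consuming one Budget k for every k and one output molecule of every restricted CRN (i, j)
   that is still relevant, i.e. q(i) <= j.  Hence the output never exceeds f(x): if q >= n it
   is at most min_k g_k(q) = f(q) <= f(x), otherwise at most the output f(x[i := q(i)]) <= f(x)
   of the restriction (i, q(i)).  Conversely, once all inputs are counted and all restricted
   CRNs are stable, outputs are produced until one of these bounds is met, which happens only
   at a value >= f(x).  As the composed CRN is output-oblivious, this output is stable. *)

section \<open>Stable computation by output-oblivious CRNs\<close>

lemma reachable_refl: "reachable Rs C C"
  unfolding reachable_def by simp

lemma reachable_trans: "reachable Rs C D \<Longrightarrow> reachable Rs D E \<Longrightarrow> reachable Rs C E"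
  unfolding reachable_def by (rule rtranclp_trans)

lemma reachable_step: "reachable Rs C D \<Longrightarrow> step Rs D E \<Longrightarrow> reachable Rs C E"
  unfolding reachable_def by (rule rtranclp.rtrancl_into_rtrancl)

lemma output_oblivious_reachable_mono:
  assumes "output_oblivious Rs Y" and "reachable Rs C D"
  shows "C Y \<le> D Y"
  using assms(2) unfolding reachable_def
proof (induction rule: rtranclp_induct)
  case (step D E)
  then obtain r where "r \<in> Rs" "E = apply_rxn r D"
    unfolding step_def by blast
  with assms(1) have "E Y = D Y + snd r Y"
    unfolding output_oblivious_def apply_rxn_def by auto
  with step show ?case by simp
qed simp

lemma stably_computes_output_le:
  assumes "stably_computes S Rs d X Y L h" and "output_oblivious Rs Y" and "length x = d"
    and "reachable Rs (initial_config d X L x) D"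
  shows "D Y \<le> h x"
proof -
  from assms(1,3,4) obtain Cf where "reachable Rs D Cf" "Cf Y = h x"
    unfolding stably_computes_def by blast
  with output_oblivious_reachable_mono[OF assms(2)] show ?thesis by metis
qed

lemma output_oblivious_stable_output:
  assumes oblivious: "output_oblivious Rs Y"
    and safe: "\<And>D. reachable Rs I D \<Longrightarrow> D Y \<le> v"
    and live: "\<exists>D. reachable Rs C D \<and> v \<le> D Y"
    and C: "reachable Rs I C"
  shows "\<exists>Cf. reachable Rs C Cf \<and> stable Rs Y Cf \<and> Cf Y = v"
proof -
  obtain Cf where CCf: "reachable Rs C Cf" and "v \<le> Cf Y"
    using live by blast
  have ICf: "reachable Rs I Cf"
    using reachable_trans[OF C CCf] .
  with \<open>v \<le> Cf Y\<close> safe have Cf_out: "Cf Y = v"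
    by (simp add: le_antisym)
  have "stable Rs Y Cf"
    unfolding stable_def
  proof (intro allI impI)
    fix D assume CfD: "reachable Rs Cf D"
    have "D Y \<le> v"
      using safe[OF reachable_trans[OF ICf CfD]] .
    moreover have "Cf Y \<le> D Y"
      using output_oblivious_reachable_mono[OF oblivious CfD] .
    ultimately show "D Y = Cf Y"
      using Cf_out by simp
  qed
  with CCf Cf_out show ?thesis by blast
qed

lemma obliviously_computable_choice:
  assumes "\<forall>t\<in>A. obliviously_computable d (F t)"
  obtains S Rs X Y L where "\<And>t. t \<in> A \<Longrightarrow>
    stably_computes (S t) (Rs t) d (X t) (Y t) (L t) (F t) \<and> output_oblivious (Rs t) (Y t)"
  using assms unfolding obliviously_computable_def by metis

section \<open>CRNs over a countable species type\<close>

definition enabled :: "('a \<Rightarrow> nat) \<times> ('a \<Rightarrow> nat) \<Rightarrow> ('a \<Rightarrow> nat) \<Rightarrow> bool" where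
  "enabled r C \<longleftrightarrow> (\<forall>s. fst r s \<le> C s)"

definition fire :: "('a \<Rightarrow> nat) \<times> ('a \<Rightarrow> nat) \<Rightarrow> ('a \<Rightarrow> nat) \<Rightarrow> ('a \<Rightarrow> nat)" where
  "fire r C = (\<lambda>s. C s - fst r s + snd r s)"

definition embed_config :: "('a::countable \<Rightarrow> nat) \<Rightarrow> config" where
  "embed_config C = (\<lambda>z. if z \<in> range (to_nat :: 'a \<Rightarrow> nat) then C (from_nat z) else 0)"

definition embed_reaction :: "('a::countable \<Rightarrow> nat) \<times> ('a \<Rightarrow> nat) \<Rightarrow> reaction" where
  "embed_reaction r = (embed_config (fst r), embed_config (snd r))"

lemma embed_config_to_nat [simp]: "embed_config C (to_nat s) = C s"
  by (simp add: embed_config_def)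

lemma applicable_embed_iff: "applicable (embed_reaction r) (embed_config C) \<longleftrightarrow> enabled r C"
proof
  assume "applicable (embed_reaction r) (embed_config C)"
  then have "embed_config (fst r) (to_nat s) \<le> embed_config C (to_nat s)" for s :: 'a
    unfolding applicable_def embed_reaction_def fst_conv by blast
  then show "enabled r C"
    unfolding enabled_def by simp
next
  assume "enabled r C"
  then show "applicable (embed_reaction r) (embed_config C)"
    unfolding applicable_def embed_reaction_def enabled_def embed_config_def by simp
qed

lemma apply_rxn_embed: "apply_rxn (embed_reaction r) (embed_config C) = embed_config (fire r C)"
  unfolding apply_rxn_def fire_def embed_reaction_def
  by (auto simp: embed_config_def)

lemma reachable_embed_fire:
  assumes "r \<in> Rs" and "enabled r C"
  shows "reachable (embed_reaction ` Rs) (embed_config C) (embed_config (fire r C))"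
proof -
  have "step (embed_reaction ` Rs) (embed_config C) (embed_config (fire r C))"
    unfolding step_def using assms by (auto simp: applicable_embed_iff apply_rxn_embed)
  then show ?thesis
    using reachable_step[OF reachable_refl] by blast
qed

lemma reachable_embed_invariant:
  assumes "reachable (embed_reaction ` Rs) (embed_config C0) D" and "P C0"
    and preserved: "\<And>C r. P C \<Longrightarrow> r \<in> Rs \<Longrightarrow> enabled r C \<Longrightarrow> P (fire r C)"
  shows "\<exists>C. P C \<and> D = embed_config C"
  using assms(1) unfolding reachable_def
proof (induction rule: rtranclp_induct)
  case (step D1 D2)
  then obtain C where "P C" and D1: "D1 = embed_config C"
    by blast
  from step.hyps(2) obtain r where r: "r \<in> Rs" "applicable (embed_reaction r) D1"
      "D2 = apply_rxn (embed_reaction r) D1"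
    unfolding step_def by blast
  then have "enabled r C" and "D2 = embed_config (fire r C)"
    using D1 by (simp_all add: applicable_embed_iff apply_rxn_embed)
  with preserved[OF \<open>P C\<close> r(1)] show ?case
    by blast
qed (use assms(2) in blast)

lemma supported_in_embed:
  assumes "\<And>s. C s \<noteq> 0 \<Longrightarrow> s \<in> A"
  shows "supported_in (to_nat ` A) (embed_config C)"
  unfolding supported_in_def
proof (intro allI impI)
  fix z assume z: "z \<notin> to_nat ` A"
  show "embed_config C z = 0"
  proof (cases "z \<in> range (to_nat :: 'a \<Rightarrow> nat)")
    case True
    then obtain s :: 'a where "z = to_nat s" by blast
    with z assms show ?thesis by auto
  qed (simp add: embed_config_def)
qed

lemma initial_config_embed:
  "initial_config d (\<lambda>i. to_nat (X i)) (to_nat L) x =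
     embed_config (\<lambda>s. (if s = L then 1 else 0) + (\<Sum>i<d. if X i = s then x ! i else 0))"
proof
  fix z
  show "initial_config d (\<lambda>i. to_nat (X i)) (to_nat L) x z =
      embed_config (\<lambda>s. (if s = L then 1 else 0) + (\<Sum>i<d. if X i = s then x ! i else 0)) z"
  proof (cases "z \<in> range (to_nat :: 'a \<Rightarrow> nat)")
    case True
    then obtain s :: 'a where "z = to_nat s" by blast
    then show ?thesis by (simp add: initial_config_def)
  next
    case False
    then show ?thesis by (auto simp: initial_config_def embed_config_def intro!: sum.neutral)
  qed
qed

lemma obliviously_computable_embed:
  fixes Rs :: "(('a::countable \<Rightarrow> nat) \<times> ('a \<Rightarrow> nat)) set" and X :: "nat \<Rightarrow> 'a"
  assumes "finite A" and "finite Rs"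
    and support: "\<And>r s. r \<in> Rs \<Longrightarrow> fst r s \<noteq> 0 \<or> snd r s \<noteq> 0 \<Longrightarrow> s \<in> A"
    and "X ` {..<d} \<subseteq> A" and "Y \<in> A" and "L \<in> A"
    and "inj_on X {..<d}" and "Y \<noteq> L" and "Y \<notin> X ` {..<d}" and "L \<notin> X ` {..<d}"
    and oblivious: "\<And>r. r \<in> Rs \<Longrightarrow> fst r Y = 0"
    and correct: "\<And>x C. length x = d \<Longrightarrow>
      reachable (embed_reaction ` Rs) (initial_config d (\<lambda>i. to_nat (X i)) (to_nat L) x) C \<Longrightarrow>
      \<exists>Cf. reachable (embed_reaction ` Rs) C Cf \<and> stable (embed_reaction ` Rs) (to_nat Y) Cf \<and> Cf (to_nat Y) = f x"
  shows "obliviously_computable d f"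
  unfolding obliviously_computable_def
proof (intro exI conjI)
  show "output_oblivious (embed_reaction ` Rs) (to_nat Y)"
    using oblivious by (simp add: output_oblivious_def embed_reaction_def)
  have "\<forall>r\<in>embed_reaction ` Rs. supported_in (to_nat ` A) (fst r) \<and> supported_in (to_nat ` A) (snd r)"
    using support by (auto simp: embed_reaction_def intro!: supported_in_embed)
  moreover have "inj_on (\<lambda>i. to_nat (X i)) {..<d}"
    using \<open>inj_on X {..<d}\<close> by (simp add: inj_on_def)
  moreover have "\<forall>i<d. to_nat (X i) \<in> to_nat ` A"
    using \<open>X ` {..<d} \<subseteq> A\<close> by auto
  moreover have "to_nat Y \<notin> (\<lambda>i. to_nat (X i)) ` {..<d}" "to_nat L \<notin> (\<lambda>i. to_nat (X i)) ` {..<d}"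
    using \<open>Y \<notin> X ` {..<d}\<close> \<open>L \<notin> X ` {..<d}\<close> by auto
  ultimately show "stably_computes (to_nat ` A) (embed_reaction ` Rs) d (\<lambda>i. to_nat (X i)) (to_nat Y) (to_nat L) f"
    unfolding stably_computes_def using assms(1,2,5,6,8) correct by simp
qed

section \<open>Quilt-affine functions have periodic increments\<close>

definition periodic_increments :: "nat \<Rightarrow> (nat list \<Rightarrow> int) \<Rightarrow> nat \<Rightarrow> bool" where
  "periodic_increments d g p \<longleftrightarrow>
     (\<forall>u v i. length u = d \<longrightarrow> length v = d \<longrightarrow> (\<forall>j<d. u ! j mod p = v ! j mod p) \<longrightarrow>
        i < d \<longrightarrow>
        g (u[i := u ! i + 1]) - g u = g (v[i := v ! i + 1]) - g v)"

lemma linear_form_list_update_Suc: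
  fixes c :: "'a::comm_semiring_1 list"
  assumes "length u = d" and "i < d"
  shows "(\<Sum>j<d. c ! j * of_nat (u[i := u ! i + 1] ! j)) = (\<Sum>j<d. c ! j * of_nat (u ! j)) + c ! i"
proof -
  have "(\<Sum>j<d. c ! j * of_nat (u[i := u ! i + 1] ! j)) =
      (\<Sum>j<d. c ! j * of_nat (u ! j) + (if j = i then c ! i else 0))"
    using assms by (intro sum.cong) (auto simp: algebra_simps)
  with assms show ?thesis
    by (simp add: sum.distrib)
qed

lemma quilt_affine_periodic_increments:
  assumes "quilt_affine d g"
  obtains p where "p > 0" and "periodic_increments d g p"
proof -
  obtain p :: nat and grad :: "rat list" and B :: "nat list \<Rightarrow> rat" where "p > 0"
    and g: "\<And>x. length x = d \<Longrightarrow> of_int (g x) = (\<Sum>i<d. grad ! i * of_nat (x ! i)) + B (map (\<lambda>v. v mod p) x)"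
    using assms unfolding quilt_affine_def by blast
  have "periodic_increments d g p"
    unfolding periodic_increments_def
  proof (intro allI impI)
    fix u v :: "nat list" and i
    assume lu: "length u = d" and lv: "length v = d" and i: "i < d"
      and congr: "\<forall>j<d. u ! j mod p = v ! j mod p"
    let ?res = "map (\<lambda>v. v mod p)"
    have res: "?res u = ?res v"
      using lu lv congr by (intro nth_equalityI) auto
    have "Suc (u ! i) mod p = Suc (v ! i) mod p"
      using congr i by (metis mod_Suc_eq)
    then have res_Suc: "?res (u[i := u ! i + 1]) = ?res (v[i := v ! i + 1])"
      using lu lv congr i by (intro nth_equalityI) (auto simp: nth_list_update)
    have "(of_int (g (u[i := u ! i + 1]) - g u) :: rat) = grad ! i + B (?res (u[i := u ! i + 1])) - B (?res u)"
      using g lu i linear_form_list_update_Suc[OF lu i, of grad] by simp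
    also have "\<dots> = of_int (g (v[i := v ! i + 1]) - g v)"
      using g lv i linear_form_list_update_Suc[OF lv i, of grad] res res_Suc by simp
    finally show "g (u[i := u ! i + 1]) - g u = g (v[i := v ! i + 1]) - g v"
      by (simp only: of_int_eq_iff)
  qed
  with \<open>p > 0\<close> show thesis by (rule that)
qed

lemma periodic_increments_dvd: "periodic_increments d g p \<Longrightarrow> p dvd P \<Longrightarrow> periodic_increments d g P"
  unfolding periodic_increments_def by (metis mod_mod_cancel)

lemma quilt_affine_common_period:
  assumes "finite G" and "\<forall>g\<in>G. quilt_affine d g"
  obtains P where "P > 0" and "\<forall>g\<in>G. periodic_increments d g P"
proof -
  have "\<forall>g\<in>G. \<exists>p. p > 0 \<and> periodic_increments d g p"
    using assms(2) quilt_affine_periodic_increments by metis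
  then obtain p where p: "\<forall>g\<in>G. p g > 0 \<and> periodic_increments d g (p g)"
    by metis
  show thesis
  proof
    show "prod p G > 0"
      using p by (simp add: prod_pos)
    show "\<forall>g\<in>G. periodic_increments d g (prod p G)"
    proof
      fix g assume "g \<in> G"
      with p show "periodic_increments d g (prod p G)"
        using periodic_increments_dvd dvd_prodI[OF assms(1) \<open>g \<in> G\<close>] by blast
    qed
  qed
qed

section \<open>The composed CRN\<close>

lemma vle_conv_nth: "vle u v \<longleftrightarrow> length u = length v \<and> (\<forall>i<length u. u ! i \<le> v ! i)"
  unfolding vle_def list_all2_conv_all_nth by simp

lemma vle_list_update: "i < length v \<Longrightarrow> v ! i \<le> j \<Longrightarrow> vle v (v[i := j])"
  unfolding vle_conv_nth by (auto simp: nth_list_update)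

(* Sub (i, j) s is species s of the CRN computing the restriction f[x(i) -> j]. *)
datatype species =
    Input nat | Output | Leader | Counter nat | Budget nat | State "nat list" | Sub "nat \<times> nat" nat

instance species :: countable
  by countable_datatype

type_synonym species_reaction = "(species \<Rightarrow> nat) \<times> (species \<Rightarrow> nat)"

locale min_quilt_crn =
  fixes d :: nat and f :: "nat list \<Rightarrow> nat" and gs :: "(nat list \<Rightarrow> int) list"
    and n :: "nat list" and P :: nat
    and SS :: "nat \<times> nat \<Rightarrow> nat set" and RR :: "nat \<times> nat \<Rightarrow> reaction set"
    and XX :: "nat \<times> nat \<Rightarrow> nat \<Rightarrow> nat" and YY LL :: "nat \<times> nat \<Rightarrow> nat"
  assumes length_n: "length n = d"
    and gs_nonempty: "gs \<noteq> []"
    and gs_nondecreasing: "\<And>g. g \<in> set gs \<Longrightarrow> nondecreasing d g"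
    and gs_periodic: "\<And>g. g \<in> set gs \<Longrightarrow> periodic_increments d g P"
    and P_pos: "P > 0"
    and f_nondecreasing: "nondecreasing d f"
    and f_min: "\<And>x. length x = d \<Longrightarrow> vle n x \<Longrightarrow> int (f x) = Min ((\<lambda>g. g x) ` set gs)"
    and sub_crn: "\<And>t. fst t < d \<Longrightarrow>
      stably_computes (SS t) (RR t) d (XX t) (YY t) (LL t) (fix_input f (fst t) (snd t))
      \<and> output_oblivious (RR t) (YY t)"
begin

abbreviation "K \<equiv> length gs"
abbreviation "g k \<equiv> gs ! k"
abbreviation "f_at t \<equiv> fix_input f (fst t) (snd t)"
abbreviation "zeros \<equiv> replicate d (0::nat)"

definition restr_idx :: "(nat \<times> nat) set" where
  "restr_idx = {t. fst t < d \<and> snd t < n ! fst t}"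

lemma finite_restr_idx: "finite restr_idx"
proof -
  have "restr_idx \<subseteq> {..<d} \<times> {..<sum_list n}"
    using length_n by (auto simp: restr_idx_def) (metis elem_le_sum_list order_less_le_trans)
  then show ?thesis
    by (rule finite_subset) simp
qed

lemma sub_crn_facts:
  assumes "t \<in> restr_idx"
  shows "stably_computes (SS t) (RR t) d (XX t) (YY t) (LL t) (f_at t)"
    and "output_oblivious (RR t) (YY t)"
    and "finite (SS t)" and "finite (RR t)"
    and "\<And>r. r \<in> RR t \<Longrightarrow> fst r (YY t) = 0"
    and "\<And>r. r \<in> RR t \<Longrightarrow> supported_in (SS t) (fst r) \<and> supported_in (SS t) (snd r)"
    and "\<And>i. i < d \<Longrightarrow> XX t i \<in> SS t" and "YY t \<in> SS t" and "LL t \<in> SS t"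
    and "YY t \<noteq> LL t" and "YY t \<notin> XX t ` {..<d}"
  using sub_crn[of t] assms
  unfolding restr_idx_def stably_computes_def output_oblivious_def by auto

definition maxn :: "nat list \<Rightarrow> nat list" where
  "maxn q = map (\<lambda>i. max (q ! i) (n ! i)) [0..<d]"

definition state_of :: "nat list \<Rightarrow> nat list" where
  "state_of q = map (\<lambda>i. if q ! i < n ! i then q ! i else n ! i + (q ! i - n ! i) mod P) [0..<d]"

definition state_step :: "nat list \<Rightarrow> nat \<Rightarrow> nat list" where
  "state_step w i = w[i := (if w ! i + 1 < n ! i + P then w ! i + 1 else n ! i)]"

definition states :: "nat list set" where
  "states = {w. length w = d \<and> (\<forall>i<d. w ! i < n ! i + P)}"

definition increment :: "nat \<Rightarrow> nat list \<Rightarrow> nat \<Rightarrow> nat" where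
  "increment k w i =
     (if n ! i \<le> w ! i then nat (g k ((maxn w)[i := maxn w ! i + 1]) - g k (maxn w)) else 0)"

definition active :: "nat list \<Rightarrow> nat \<times> nat \<Rightarrow> bool" where
  "active q t \<longleftrightarrow> q ! fst t \<le> snd t"

lemma length_state_of [simp]: "length (state_of q) = d"
  by (simp add: state_of_def)

lemma nth_state_of: "i < d \<Longrightarrow> state_of q ! i = (if q ! i < n ! i then q ! i else n ! i + (q ! i - n ! i) mod P)"
  by (simp add: state_of_def)

lemma length_maxn [simp]: "length (maxn q) = d"
  by (simp add: maxn_def)

lemma nth_maxn: "i < d \<Longrightarrow> maxn q ! i = max (q ! i) (n ! i)"
  by (simp add: maxn_def)

lemma maxn_zeros: "maxn zeros = n"
  unfolding maxn_def using length_n by (auto intro!: nth_equalityI)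

lemma state_of_in_states: "state_of q \<in> states"
  unfolding states_def using P_pos by (auto simp: nth_state_of)

lemma state_step_in_states: "w \<in> states \<Longrightarrow> state_step w i \<in> states"
  unfolding states_def state_step_def using P_pos
  by (cases "i < length w") (auto simp: nth_list_update)

lemma finite_states: "finite states"
proof -
  have "states \<subseteq> {w. set w \<subseteq> {..<sum_list n + P} \<and> length w = d}"
  proof (clarify, intro conjI subsetI)
    fix w v assume w: "w \<in> states" and "v \<in> set w"
    then obtain i where i: "i < d" "v = w ! i"
      by (auto simp: in_set_conv_nth states_def)
    with w have "v < n ! i + P"
      by (simp add: states_def)
    with i length_n show "v \<in> {..<sum_list n + P}"
      using elem_le_sum_list[of i n] by simp
  qed (simp add: states_def)
  then show ?thesis
    by (rule finite_subset) (rule finite_lists_length_eq, simp)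
qed

lemma state_step_state_of:
  assumes "length q = d" and "i < d"
  shows "state_step (state_of q) i = state_of (q[i := Suc (q ! i)])"
proof (rule nth_equalityI)
  fix k assume "k < length (state_step (state_of q) i)"
  then have k: "k < d" by (simp add: state_step_def)
  show "state_step (state_of q) i ! k = state_of (q[i := Suc (q ! i)]) ! k"
  proof (cases "k = i")
    case True
    have "(Suc (q ! i) - n ! i) mod P = (if Suc ((q ! i - n ! i) mod P) < P then Suc ((q ! i - n ! i) mod P) else 0)"
      if "n ! i \<le> q ! i"
      using that P_pos mod_less_divisor[OF P_pos, of "q ! i - n ! i"] by (simp add: Suc_diff_le mod_Suc)
    then show ?thesis
      using True k assms by (auto simp: state_step_def nth_state_of)
  qed (use k assms in \<open>simp add: state_step_def nth_state_of\<close>)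
qed (simp add: state_step_def)

lemma active_state_of: "t \<in> restr_idx \<Longrightarrow> active (state_of q) t \<longleftrightarrow> active q t"
  unfolding active_def restr_idx_def by (auto simp: nth_state_of split: if_splits)

lemma maxn_state_of_mod: "i < d \<Longrightarrow> maxn (state_of q) ! i mod P = maxn q ! i mod P"
  by (auto simp: nth_maxn nth_state_of mod_add_right_eq)

lemma vle_n_maxn: "vle n (maxn q)"
  unfolding vle_conv_nth using length_n by (auto simp: nth_maxn)

lemma vle_maxn: "length q = d \<Longrightarrow> vle q (maxn q)"
  unfolding vle_conv_nth by (simp add: nth_maxn)

lemma maxn_eq_self:
  assumes "vle n q"
  shows "maxn q = q"
proof -
  have "length q = d" and "\<forall>i<d. n ! i \<le> q ! i"
    using assms length_n by (simp_all add: vle_conv_nth)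
  then show ?thesis
    by (intro nth_equalityI) (simp_all add: nth_maxn)
qed

lemma maxn_update_below:
  assumes "length q = d" and "i < d" and "q ! i < n ! i"
  shows "maxn (q[i := Suc (q ! i)]) = maxn q"
  using assms by (intro nth_equalityI) (auto simp: nth_maxn nth_list_update)

lemma maxn_update_above:
  assumes "length q = d" and "i < d" and "n ! i \<le> q ! i"
  shows "maxn (q[i := Suc (q ! i)]) = (maxn q)[i := Suc (maxn q ! i)]"
  using assms by (intro nth_equalityI) (auto simp: nth_maxn nth_list_update)

lemma g_mono: "k < K \<Longrightarrow> vle u v \<Longrightarrow> length u = d \<Longrightarrow> g k u \<le> g k v"
  using gs_nondecreasing[OF nth_mem] unfolding nondecreasing_def vle_conv_nth by auto

lemma f_mono: "vle u v \<Longrightarrow> length u = d \<Longrightarrow> f u \<le> f v"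
  using f_nondecreasing unfolding nondecreasing_def vle_conv_nth by auto

lemma f_le_g: "k < K \<Longrightarrow> length u = d \<Longrightarrow> vle n u \<Longrightarrow> int (f u) \<le> g k u"
  using f_min[of u] by simp

lemma f_eq_some_g:
  assumes "length u = d" and "vle n u"
  obtains k where "k < K" and "g k u = int (f u)"
proof -
  have "Min ((\<lambda>g. g u) ` set gs) \<in> (\<lambda>g. g u) ` set gs"
    using gs_nonempty by (intro Min_in) auto
  with f_min[OF assms] show thesis
    by (metis imageE in_set_conv_nth that)
qed

lemma g_maxn_nonneg:
  assumes "k < K"
  shows "0 \<le> g k (maxn q)"
  using f_le_g[OF assms length_maxn[of q] vle_n_maxn] by linarith

lemma g_maxn_update:
  assumes "length q = d" and "i < d" and "k < K"
  shows "g k (maxn (q[i := Suc (q ! i)])) = g k (maxn q) + int (increment k (state_of q) i)"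
proof (cases "q ! i < n ! i")
  case True
  then show ?thesis
    using assms by (simp add: maxn_update_below increment_def nth_state_of)
next
  case False
  let ?u = "maxn q" and ?v = "maxn (state_of q)"
  have "g k (?u[i := ?u ! i + 1]) - g k ?u = g k (?v[i := ?v ! i + 1]) - g k ?v"
    using gs_periodic[OF nth_mem[OF assms(3)]] assms maxn_state_of_mod
    unfolding periodic_increments_def by simp
  moreover have "g k ?v \<le> g k (?v[i := ?v ! i + 1])"
    using g_mono[OF assms(3) vle_list_update] assms by simp
  moreover have "n ! i \<le> state_of q ! i"
    using False assms by (simp add: nth_state_of)
  ultimately show ?thesis
    using False assms by (simp add: maxn_update_above increment_def)
qed

definition r_start :: species_reaction where
  "r_start = (\<lambda>s. if s = Leader then 1 else 0,
     \<lambda>s. case s of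
         State w \<Rightarrow> if w = state_of zeros then 1 else 0
       | Budget k \<Rightarrow> if k < K then nat (g k n) else 0
       | Sub t s' \<Rightarrow> if t \<in> restr_idx \<and> s' = LL t then 1 else 0
       | _ \<Rightarrow> 0)"

definition r_split :: "nat \<Rightarrow> species_reaction" where
  "r_split i = (\<lambda>s. if s = Input i then 1 else 0,
     \<lambda>s. case s of
         Counter i' \<Rightarrow> if i' = i then 1 else 0
       | Sub t s' \<Rightarrow> if t \<in> restr_idx \<and> s' = XX t i then 1 else 0
       | _ \<Rightarrow> 0)"

definition r_count :: "nat list \<Rightarrow> nat \<Rightarrow> species_reaction" where
  "r_count w i = (\<lambda>s. if s = State w \<or> s = Counter i then 1 else 0,
     \<lambda>s. case s of
         State w' \<Rightarrow> if w' = state_step w i then 1 else 0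
       | Budget k \<Rightarrow> if k < K then increment k w i else 0
       | _ \<Rightarrow> 0)"

definition r_min :: "nat list \<Rightarrow> species_reaction" where
  "r_min w = (\<lambda>s. case s of
         State w' \<Rightarrow> if w' = w then 1 else 0
       | Budget k \<Rightarrow> if k < K then 1 else 0
       | Sub t s' \<Rightarrow> if t \<in> restr_idx \<and> active w t \<and> s' = YY t then 1 else 0
       | _ \<Rightarrow> 0,
     \<lambda>s. if s = State w \<or> s = Output then 1 else 0)"

definition r_sub :: "nat \<times> nat \<Rightarrow> reaction \<Rightarrow> species_reaction" where
  "r_sub t r = (\<lambda>s. case s of Sub t' s' \<Rightarrow> if t' = t then fst r s' else 0 | _ \<Rightarrow> 0,
     \<lambda>s. case s of Sub t' s' \<Rightarrow> if t' = t then snd r s' else 0 | _ \<Rightarrow> 0)"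

definition reactions :: "species_reaction set" where
  "reactions = {r_start} \<union> r_split ` {..<d} \<union> (\<lambda>(w, i). r_count w i) ` (states \<times> {..<d})
     \<union> r_min ` states \<union> (\<Union>t\<in>restr_idx. r_sub t ` RR t)"

(* A reachable configuration on input x: a holds the inputs not yet split, b tells whether
   the leader has started, q counts the inputs consumed by the leader, m is the output count,
   and E t is the configuration of the copy of restricted CRN t. *)
definition conf ::
  "nat list \<Rightarrow> nat list \<Rightarrow> bool \<Rightarrow> nat list \<Rightarrow> nat \<Rightarrow> (nat \<times> nat \<Rightarrow> config) \<Rightarrow> species \<Rightarrow> nat" where
  "conf x a b q m E = (\<lambda>s. case s of
       Input i \<Rightarrow> if i < d then a ! i else 0
     | Output \<Rightarrow> m
     | Leader \<Rightarrow> if b then 0 else 1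
     | Counter i \<Rightarrow> if i < d then x ! i - a ! i - q ! i else 0
     | Budget k \<Rightarrow> if b \<and> k < K then nat (g k (maxn q)) - m else 0
     | State w \<Rightarrow> if b \<and> w = state_of q then 1 else 0
     | Sub t s' \<Rightarrow> if t \<in> restr_idx then E t s' else 0)"

definition pending :: "nat \<times> nat \<Rightarrow> nat list \<Rightarrow> bool \<Rightarrow> nat \<Rightarrow> nat" where
  "pending t a b s = (\<Sum>i<d. if XX t i = s then a ! i else 0) + (if s = LL t \<and> \<not> b then 1 else 0)"

(* The copy e of CRN t equals a configuration reachable in t, up to the inputs and leader
   still to be delivered and, while t is active, the m outputs consumed by r_min. *)
definition tracks ::
  "nat \<times> nat \<Rightarrow> nat list \<Rightarrow> nat list \<Rightarrow> bool \<Rightarrow> nat list \<Rightarrow> nat \<Rightarrow> config \<Rightarrow> bool" where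
  "tracks t x a b q m e \<longleftrightarrow> (\<exists>D. reachable (RR t) (initial_config d (XX t) (LL t) x) D
      \<and> (\<forall>s. s \<noteq> YY t \<longrightarrow> D s = e s + pending t a b s)
      \<and> (active q t \<longrightarrow> D (YY t) = e (YY t) + m))"

definition consistent ::
  "nat list \<Rightarrow> nat list \<Rightarrow> bool \<Rightarrow> nat list \<Rightarrow> nat \<Rightarrow> (nat \<times> nat \<Rightarrow> config) \<Rightarrow> bool" where
  "consistent x a b q m E \<longleftrightarrow> length a = d \<and> length q = d \<and> (\<forall>i<d. a ! i + q ! i \<le> x ! i)
     \<and> (\<not> b \<longrightarrow> m = 0 \<and> q = zeros) \<and> (b \<longrightarrow> (\<forall>k<K. m \<le> nat (g k (maxn q))))
     \<and> (\<forall>t\<in>restr_idx. tracks t x a b q m (E t))"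

lemma tracks_active_mono:
  "tracks t x a b q m e \<Longrightarrow> (active q' t \<Longrightarrow> active q t) \<Longrightarrow> tracks t x a b q' m e"
  unfolding tracks_def by blast

lemma enabled_start_iff: "enabled r_start (conf x a b q m E) \<longleftrightarrow> \<not> b"
proof
  assume "enabled r_start (conf x a b q m E)"
  then have "fst r_start Leader \<le> conf x a b q m E Leader"
    unfolding enabled_def by blast
  then show "\<not> b"
    by (simp add: r_start_def conf_def split: if_splits)
qed (auto simp: enabled_def r_start_def conf_def split: species.split)

lemma fire_start:
  assumes "consistent x a False q m E"
  shows "fire r_start (conf x a False q m E) = conf x a True q m (\<lambda>t s. E t s + (if s = LL t then 1 else 0))"
proof
  have "q = zeros" and "m = 0"
    using assms by (simp_all add: consistent_def)
  then show "fire r_start (conf x a False q m E) s = conf x a True q m (\<lambda>t s. E t s + (if s = LL t then 1 else 0)) s" for s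
    by (cases s) (simp_all add: fire_def r_start_def conf_def maxn_zeros)
qed

lemma tracks_start:
  assumes "tracks t x a False q m e" and "t \<in> restr_idx"
  shows "tracks t x a True q m (\<lambda>s. e s + (if s = LL t then 1 else 0))"
  using assms sub_crn_facts(10)[OF assms(2)] unfolding tracks_def pending_def by auto

lemma consistent_start:
  assumes "consistent x a False q m E"
  shows "consistent x a True q m (\<lambda>t s. E t s + (if s = LL t then 1 else 0))"
  using assms tracks_start unfolding consistent_def by auto

lemma enabled_split_iff: "i < d \<Longrightarrow> enabled (r_split i) (conf x a b q m E) \<longleftrightarrow> 0 < a ! i"
proof
  assume "i < d" "enabled (r_split i) (conf x a b q m E)"
  then have "fst (r_split i) (Input i) \<le> conf x a b q m E (Input i)"
    unfolding enabled_def by blast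
  with \<open>i < d\<close> show "0 < a ! i"
    by (simp add: r_split_def conf_def)
qed (auto simp: enabled_def r_split_def conf_def split: species.split)

lemma fire_split:
  assumes "consistent x a b q m E" and "i < d" and "0 < a ! i"
  shows "fire (r_split i) (conf x a b q m E) =
    conf x (a[i := a ! i - 1]) b q m (\<lambda>t s. E t s + (if s = XX t i then 1 else 0))"
proof
  fix s
  have "a ! i + q ! i \<le> x ! i" and "length a = d"
    using assms by (simp_all add: consistent_def)
  with assms show "fire (r_split i) (conf x a b q m E) s =
      conf x (a[i := a ! i - 1]) b q m (\<lambda>t s. E t s + (if s = XX t i then 1 else 0)) s"
    by (cases s) (simp_all add: fire_def r_split_def conf_def nth_list_update Suc_diff_le)
qed

lemma pending_split:
  assumes "t \<in> restr_idx" and "i < d" and "0 < a ! i" and "length a = d"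
  shows "pending t (a[i := a ! i - 1]) b s + (if s = XX t i then 1 else 0) = pending t a b s"
proof -
  let ?F = "\<lambda>a' j. if XX t j = s then a' ! j else 0"
  have "(\<Sum>j\<in>{..<d}-{i}. ?F (a[i := a ! i - 1]) j) = (\<Sum>j\<in>{..<d}-{i}. ?F a j)"
    by (rule sum.cong) auto
  then have "(\<Sum>j<d. ?F (a[i := a ! i - 1]) j) = ?F (a[i := a ! i - 1]) i + (\<Sum>j\<in>{..<d}-{i}. ?F a j)"
    using assms(2) by (simp add: sum.remove)
  moreover have "(\<Sum>j<d. ?F a j) = ?F a i + (\<Sum>j\<in>{..<d}-{i}. ?F a j)"
    using assms(2) by (simp add: sum.remove)
  ultimately show ?thesis
    using assms(2-4) unfolding pending_def by auto
qed

lemma tracks_split: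
  assumes "tracks t x a b q m e" and "t \<in> restr_idx" and "i < d" and "0 < a ! i" and "length a = d"
  shows "tracks t x (a[i := a ! i - 1]) b q m (\<lambda>s. e s + (if s = XX t i then 1 else 0))"
proof -
  obtain D where D: "reachable (RR t) (initial_config d (XX t) (LL t) x) D"
      and off: "\<forall>s. s \<noteq> YY t \<longrightarrow> D s = e s + pending t a b s"
      and on: "active q t \<longrightarrow> D (YY t) = e (YY t) + m"
    using assms(1) unfolding tracks_def by blast
  have "D s = (e s + (if s = XX t i then 1 else 0)) + pending t (a[i := a ! i - 1]) b s"
    if "s \<noteq> YY t" for s
    using off that pending_split[OF assms(2-5), of b s] by simp
  moreover have "YY t \<noteq> XX t i"
    using sub_crn_facts(11)[OF assms(2)] assms(3) by auto
  ultimately show ?thesis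
    using D on unfolding tracks_def by auto
qed

lemma consistent_split:
  assumes "consistent x a b q m E" and "i < d" and "0 < a ! i"
  shows "consistent x (a[i := a ! i - 1]) b q m (\<lambda>t s. E t s + (if s = XX t i then 1 else 0))"
proof -
  have "length a = d"
    using assms by (simp add: consistent_def)
  moreover have "\<forall>j<d. a[i := a ! i - 1] ! j + q ! j \<le> x ! j"
    using assms unfolding consistent_def by (metis diff_le_self le_trans add_le_mono1 nth_list_update)
  ultimately show ?thesis
    using assms tracks_split unfolding consistent_def by simp
qed

lemma enabled_count_iff:
  assumes "i < d"
  shows "enabled (r_count w i) (conf x a b q m E) \<longleftrightarrow> b \<and> w = state_of q \<and> a ! i + q ! i < x ! i"
proof
  assume "enabled (r_count w i) (conf x a b q m E)"
  then have "fst (r_count w i) (State w) \<le> conf x a b q m E (State w)"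
    and "fst (r_count w i) (Counter i) \<le> conf x a b q m E (Counter i)"
    unfolding enabled_def by blast+
  with assms show "b \<and> w = state_of q \<and> a ! i + q ! i < x ! i"
    by (simp add: r_count_def conf_def split: if_splits)
qed (use assms in \<open>auto simp: enabled_def r_count_def conf_def split: species.split\<close>)

lemma fire_count:
  assumes "consistent x a True q m E" and "i < d" and "a ! i + q ! i < x ! i"
  shows "fire (r_count (state_of q) i) (conf x a True q m E) = conf x a True (q[i := Suc (q ! i)]) m E"
proof
  fix s
  have "length q = d" and "\<forall>k<K. m \<le> nat (g k (maxn q))"
    using assms by (simp_all add: consistent_def)
  then have "nat (g k (maxn q)) - m + increment k (state_of q) i = nat (g k (maxn (q[i := Suc (q ! i)]))) - m"
    if "k < K" for k
    using that g_maxn_update[OF _ assms(2) that] g_maxn_nonneg[OF that] by (simp add: nat_add_distrib)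
  with \<open>length q = d\<close> assms show "fire (r_count (state_of q) i) (conf x a True q m E) s =
      conf x a True (q[i := Suc (q ! i)]) m E s"
    by (cases s) (auto simp: fire_def r_count_def conf_def state_step_state_of nth_list_update)
qed

lemma consistent_count:
  assumes "consistent x a True q m E" and "i < d" and "a ! i + q ! i < x ! i"
  shows "consistent x a True (q[i := Suc (q ! i)]) m E"
proof -
  have lq: "length q = d"
    using assms by (simp add: consistent_def)
  have "m \<le> nat (g k (maxn (q[i := Suc (q ! i)])))" if "k < K" for k
  proof -
    have "m \<le> nat (g k (maxn q))"
      using assms that by (simp add: consistent_def)
    then show ?thesis
      using g_maxn_update[OF lq assms(2) that] by simp
  qed
  moreover have "active (q[i := Suc (q ! i)]) t \<Longrightarrow> active q t" for t
    using lq assms(2) unfolding active_def by (cases "fst t = i") auto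
  moreover have "\<forall>j<d. a ! j + q[i := Suc (q ! i)] ! j \<le> x ! j"
    using assms lq unfolding consistent_def by (auto simp: nth_list_update)
  ultimately show ?thesis
    using assms tracks_active_mono unfolding consistent_def by auto
qed

lemma enabled_min_iff:
  assumes "length q = d"
  shows "enabled (r_min w) (conf x a b q m E) \<longleftrightarrow> b \<and> w = state_of q
    \<and> (\<forall>k<K. m < nat (g k (maxn q))) \<and> (\<forall>t\<in>restr_idx. active q t \<longrightarrow> 0 < E t (YY t))"
    (is "_ \<longleftrightarrow> ?enabled")
proof
  assume en: "enabled (r_min w) (conf x a b q m E)"
  then have "fst (r_min w) (State w) \<le> conf x a b q m E (State w)"
    unfolding enabled_def by blast
  then have bw: "b \<and> w = state_of q"
    by (simp add: r_min_def conf_def split: if_splits)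
  moreover have "m < nat (g k (maxn q))" if "k < K" for k
    using en[unfolded enabled_def, rule_format, of "Budget k"] that bw by (simp add: r_min_def conf_def)
  moreover have "0 < E t (YY t)" if "t \<in> restr_idx" "active q t" for t
    using en[unfolded enabled_def, rule_format, of "Sub t (YY t)"] that bw active_state_of
    by (simp add: r_min_def conf_def)
  ultimately show ?enabled
    by blast
qed (auto simp: enabled_def r_min_def conf_def active_state_of Suc_le_eq split: species.split)

lemma fire_min:
  assumes "\<forall>k<K. m < nat (g k (maxn q))" and "\<forall>t\<in>restr_idx. active q t \<longrightarrow> 0 < E t (YY t)"
  shows "fire (r_min (state_of q)) (conf x a True q m E) =
    conf x a True q (Suc m) (\<lambda>t s. E t s - (if active q t \<and> s = YY t then 1 else 0))"
proof
  show "fire (r_min (state_of q)) (conf x a True q m E) s =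
      conf x a True q (Suc m) (\<lambda>t s. E t s - (if active q t \<and> s = YY t then 1 else 0)) s" for s
    using assms active_state_of by (cases s) (auto simp: fire_def r_min_def conf_def)
qed

lemma tracks_min:
  assumes "tracks t x a b q m e" and "active q t \<longrightarrow> 0 < e (YY t)"
  shows "tracks t x a b q (Suc m) (\<lambda>s. e s - (if active q t \<and> s = YY t then 1 else 0))"
  using assms unfolding tracks_def by auto

lemma consistent_min:
  assumes "consistent x a True q m E"
    and "\<forall>k<K. m < nat (g k (maxn q))" and "\<forall>t\<in>restr_idx. active q t \<longrightarrow> 0 < E t (YY t)"
  shows "consistent x a True q (Suc m) (\<lambda>t s. E t s - (if active q t \<and> s = YY t then 1 else 0))"
  using assms tracks_min unfolding consistent_def by (simp add: Suc_le_eq)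

lemma enabled_sub_iff: "t \<in> restr_idx \<Longrightarrow> enabled (r_sub t r) (conf x a b q m E) \<longleftrightarrow> enabled r (E t)"
  unfolding enabled_def
proof
  assume "t \<in> restr_idx" and en: "\<forall>s. fst (r_sub t r) s \<le> conf x a b q m E s"
  show "\<forall>s. fst r s \<le> E t s"
    using en[rule_format, of "Sub t s" for s] \<open>t \<in> restr_idx\<close> by (simp add: r_sub_def conf_def)
qed (auto simp: r_sub_def conf_def split: species.split)

lemma fire_sub: "t \<in> restr_idx \<Longrightarrow> fire (r_sub t r) (conf x a b q m E) = conf x a b q m (E(t := fire r (E t)))"
  by (rule ext, simp add: fire_def r_sub_def conf_def split: species.split)

lemma tracks_sub:
  assumes "tracks t x a b q m e" and "t \<in> restr_idx" and "r \<in> RR t" and "enabled r e"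
  shows "tracks t x a b q m (fire r e)"
proof -
  obtain D where D: "reachable (RR t) (initial_config d (XX t) (LL t) x) D"
      "\<forall>s. s \<noteq> YY t \<longrightarrow> D s = e s + pending t a b s" "active q t \<longrightarrow> D (YY t) = e (YY t) + m"
    using assms(1) unfolding tracks_def by blast
  have no_Y: "fst r (YY t) = 0"
    using sub_crn_facts(5)[OF assms(2,3)] .
  have "applicable r D"
    unfolding applicable_def
    using D(2) assms(4) no_Y unfolding enabled_def by (metis le_add1 order_trans zero_le)
  then have "reachable (RR t) (initial_config d (XX t) (LL t) x) (apply_rxn r D)"
    using reachable_step[OF D(1)] assms(3) unfolding step_def by blast
  moreover have "apply_rxn r D s = fire r e s + pending t a b s" if "s \<noteq> YY t" for s
  proof -
    have "fst r s \<le> e s"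
      using assms(4) unfolding enabled_def by blast
    with D(2) that show ?thesis
      by (simp add: apply_rxn_def fire_def)
  qed
  ultimately show ?thesis
    using D(3) no_Y unfolding tracks_def by (intro exI[of _ "apply_rxn r D"]) (auto simp: apply_rxn_def fire_def)
qed

lemma consistent_sub:
  assumes "consistent x a b q m E" and "t \<in> restr_idx" and "r \<in> RR t" and "enabled r (E t)"
  shows "consistent x a b q m (E(t := fire r (E t)))"
  using assms tracks_sub unfolding consistent_def by auto

lemma reactions_cases:
  assumes "r \<in> reactions"
  obtains (start) "r = r_start"
    | (split) i where "i < d" "r = r_split i"
    | (count) w i where "w \<in> states" "i < d" "r = r_count w i"
    | (min) w where "w \<in> states" "r = r_min w"
    | (sub) t r' where "t \<in> restr_idx" "r' \<in> RR t" "r = r_sub t r'"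
  using assms unfolding reactions_def by auto

lemma consistent_fire:
  assumes cons: "consistent x a b q m E" and "r \<in> reactions" and en: "enabled r (conf x a b q m E)"
  shows "\<exists>a' b' q' m' E'. consistent x a' b' q' m' E' \<and> fire r (conf x a b q m E) = conf x a' b' q' m' E'"
proof -
  have lq: "length q = d"
    using cons by (simp add: consistent_def)
  from \<open>r \<in> reactions\<close> show ?thesis
  proof (cases rule: reactions_cases)
    case start
    with en have "b = False"
      by (simp add: enabled_start_iff)
    with cons have cons': "consistent x a False q m E"
      by simp
    show ?thesis
      unfolding start \<open>b = False\<close> using consistent_start[OF cons'] fire_start[OF cons'] by blast
  next
    case (split i)
    with en have pos: "0 < a ! i"
      by (simp add: enabled_split_iff)
    show ?thesis
      unfolding split(2) using consistent_split[OF cons split(1) pos] fire_split[OF cons split(1) pos] by blast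
  next
    case (count w i)
    with en have "b = True" and "w = state_of q" and uncounted: "a ! i + q ! i < x ! i"
      by (simp_all add: enabled_count_iff)
    with cons have cons': "consistent x a True q m E"
      by simp
    show ?thesis
      unfolding count(3) \<open>b = True\<close> \<open>w = state_of q\<close>
      using consistent_count[OF cons' count(2) uncounted] fire_count[OF cons' count(2) uncounted] by blast
  next
    case (min w)
    with en have "b = True" and "w = state_of q" and budget: "\<forall>k<K. m < nat (g k (maxn q))"
      and sub: "\<forall>t\<in>restr_idx. active q t \<longrightarrow> 0 < E t (YY t)"
      by (simp_all add: enabled_min_iff[OF lq])
    with cons have cons': "consistent x a True q m E"
      by simp
    show ?thesis
      unfolding min(2) \<open>b = True\<close> \<open>w = state_of q\<close>
      using consistent_min[OF cons' budget sub] fire_min[where E = E, OF budget sub] by blast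
  next
    case (sub t r')
    with en have "enabled r' (E t)"
      by (simp add: enabled_sub_iff)
    then show ?thesis
      unfolding sub(3) using consistent_sub[OF cons sub(1,2)] fire_sub[OF sub(1)] by blast
  qed
qed

abbreviation crn :: "reaction set" where
  "crn \<equiv> embed_reaction ` reactions"

abbreviation initial :: "nat list \<Rightarrow> config" where
  "initial x \<equiv> initial_config d (\<lambda>i. to_nat (Input i)) (to_nat Leader) x"

abbreviation reaches :: "(species \<Rightarrow> nat) \<Rightarrow> (species \<Rightarrow> nat) \<Rightarrow> bool" where
  "reaches C D \<equiv> reachable crn (embed_config C) (embed_config D)"

lemma initial_eq_conf: "initial x = embed_config (conf x x False zeros 0 (\<lambda>_ _. 0))"
  unfolding initial_config_embed
proof (rule arg_cong[where f = embed_config], rule ext)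
  show "(if s = Leader then 1 else 0) + (\<Sum>i<d. if Input i = s then x ! i else 0) =
      conf x x False zeros 0 (\<lambda>_ _. 0) s" for s
    by (cases s) (simp_all add: conf_def)
qed

lemma consistent_initial:
  assumes "length x = d"
  shows "consistent x x False zeros 0 (\<lambda>_ _. 0)"
proof -
  have "tracks t x x False zeros 0 (\<lambda>_. 0)" if t: "t \<in> restr_idx" for t
    unfolding tracks_def
  proof (intro exI conjI allI impI)
    show "reachable (RR t) (initial_config d (XX t) (LL t) x) (initial_config d (XX t) (LL t) x)"
      by (rule reachable_refl)
    show "initial_config d (XX t) (LL t) x s = 0 + pending t x False s" for s
      by (simp add: initial_config_def pending_def)
    have "\<forall>i<d. XX t i \<noteq> YY t"
      using sub_crn_facts(11)[OF t] by (metis image_eqI lessThan_iff)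
    with sub_crn_facts(10)[OF t] show "initial_config d (XX t) (LL t) x (YY t) = 0 + 0"
      by (auto simp: initial_config_def intro!: sum.neutral)
  qed
  with assms show ?thesis
    unfolding consistent_def by simp
qed

lemma reachable_consistent:
  assumes "length x = d" and "reachable crn (initial x) C"
  obtains a b q m E where "consistent x a b q m E" and "C = embed_config (conf x a b q m E)"
proof -
  have "\<exists>C'. (\<exists>a b q m E. consistent x a b q m E \<and> C' = conf x a b q m E) \<and> C = embed_config C'"
  proof (rule reachable_embed_invariant)
    show "reachable crn (embed_config (conf x x False zeros 0 (\<lambda>_ _. 0))) C"
      using assms(2) by (simp add: initial_eq_conf)
    show "\<exists>a b q m E. consistent x a b q m E \<and> conf x x False zeros 0 (\<lambda>_ _. 0) = conf x a b q m E"
      using consistent_initial[OF assms(1)] by blast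
  next
    fix C' r
    assume "\<exists>a b q m E. consistent x a b q m E \<and> C' = conf x a b q m E" and "r \<in> reactions" and "enabled r C'"
    then show "\<exists>a b q m E. consistent x a b q m E \<and> fire r C' = conf x a b q m E"
      using consistent_fire by blast
  qed
  with that show thesis
    by blast
qed

lemma output_le_restricted:
  assumes x: "length x = d" and "consistent x a b q m E" and t: "t \<in> restr_idx" and "active q t"
  shows "m \<le> f_at t x"
proof -
  have "tracks t x a b q m (E t)"
    using assms unfolding consistent_def by blast
  with \<open>active q t\<close> obtain D where D: "reachable (RR t) (initial_config d (XX t) (LL t) x) D"
      "D (YY t) = E t (YY t) + m"
    unfolding tracks_def by auto
  with stably_computes_output_le[OF sub_crn_facts(1,2)[OF t] x D(1)] show ?thesis
    by simp
qed

lemma output_le_f: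
  assumes x: "length x = d" and cons: "consistent x a b q m E"
  shows "m \<le> f x"
proof (cases b)
  case False
  with cons show ?thesis
    by (simp add: consistent_def)
next
  case True
  have lq: "length q = d" and le: "\<forall>i<d. a ! i + q ! i \<le> x ! i"
    using cons by (simp_all add: consistent_def)
  show ?thesis
  proof (cases "vle n q")
    case True
    then obtain k where k: "k < K" "g k q = int (f q)"
      using f_eq_some_g[OF lq] by blast
    have "m \<le> nat (g k (maxn q))"
      using cons \<open>b\<close> k(1) by (simp add: consistent_def)
    also have "\<dots> = f q"
      using k(2) maxn_eq_self[OF True] by simp
    also have "\<dots> \<le> f x"
      using lq x le by (intro f_mono) (auto simp: vle_conv_nth intro: add_leD2)
    finally show ?thesis .
  next
    case False
    then obtain i where i: "i < d" "q ! i < n ! i"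
      using lq length_n unfolding vle_conv_nth by (metis not_le)
    then have "(i, q ! i) \<in> restr_idx" and "active q (i, q ! i)"
      by (simp_all add: restr_idx_def active_def)
    with output_le_restricted[OF x cons] have "m \<le> f (x[i := q ! i])"
      by (fastforce simp: fix_input_def)
    also have "\<dots> \<le> f x"
      using x le i by (intro f_mono) (auto simp: vle_conv_nth nth_list_update)
    finally show ?thesis .
  qed
qed

lemma reaches_started:
  assumes "consistent x a b q m E"
  shows "\<exists>E'. reaches (conf x a b q m E) (conf x a True q m E') \<and> consistent x a True q m E'"
proof (cases b)
  case True
  with assms show ?thesis
    using reachable_refl by (intro exI[of _ E]) simp
next
  case False
  with assms have cons: "consistent x a False q m E"
    by simp
  have "r_start \<in> reactions" and "enabled r_start (conf x a False q m E)"
    by (simp_all add: reactions_def enabled_start_iff)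
  from reachable_embed_fire[OF this] False show ?thesis
    using fire_start[OF cons] consistent_start[OF cons] by auto
qed

lemma reaches_inputs_split:
  "consistent x a True q m E \<Longrightarrow>
    \<exists>E'. reaches (conf x a True q m E) (conf x zeros True q m E') \<and> consistent x zeros True q m E'"
proof (induction "sum_list a" arbitrary: a E rule: less_induct)
  case less
  have la: "length a = d"
    using less.prems by (simp add: consistent_def)
  show ?case
  proof (cases "\<exists>i<d. 0 < a ! i")
    case False
    then have "a = zeros"
      using la by (intro nth_equalityI) auto
    with less.prems show ?thesis
      using reachable_refl by blast
  next
    case True
    then obtain i where i: "i < d" "0 < a ! i"
      by blast
    let ?a = "a[i := a ! i - 1]" and ?E = "\<lambda>t s. E t s + (if s = XX t i then 1 else 0)"
    have "r_split i \<in> reactions" and "enabled (r_split i) (conf x a True q m E)"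
      using i by (simp_all add: reactions_def enabled_split_iff)
    from reachable_embed_fire[OF this]
    have "reaches (conf x a True q m E) (conf x ?a True q m ?E)"
      using fire_split[OF less.prems i] by simp
    moreover have "sum_list ?a < sum_list a"
      using i la sum_list_update[of i a "a ! i - 1"] elem_le_sum_list[of i a] by simp
    ultimately show ?thesis
      using less.hyps consistent_split[OF less.prems i] reachable_trans by blast
  qed
qed

lemma reaches_counted:
  "consistent x zeros True q m E \<Longrightarrow> length x = d \<Longrightarrow>
    reaches (conf x zeros True q m E) (conf x zeros True x m E) \<and> consistent x zeros True x m E"
proof (induction "\<Sum>j<d. x ! j - q ! j" arbitrary: q rule: less_induct)
  case less
  have lq: "length q = d" and le: "\<forall>j<d. q ! j \<le> x ! j"
    using less.prems by (simp_all add: consistent_def)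
  show ?case
  proof (cases "\<exists>i<d. q ! i < x ! i")
    case False
    with le have "q ! j = x ! j" if "j < d" for j
      using that by (meson le_antisym not_less)
    then have "q = x"
      using lq less.prems(2) by (intro nth_equalityI) auto
    with less.prems show ?thesis
      using reachable_refl by blast
  next
    case True
    then obtain i where i: "i < d" "q ! i < x ! i"
      by blast
    let ?q = "q[i := Suc (q ! i)]"
    have uncounted: "zeros ! i + q ! i < x ! i"
      using i by simp
    have "r_count (state_of q) i \<in> reactions" and "enabled (r_count (state_of q) i) (conf x zeros True q m E)"
      using i state_of_in_states uncounted by (auto simp: reactions_def enabled_count_iff)
    from reachable_embed_fire[OF this]
    have "reaches (conf x zeros True q m E) (conf x zeros True ?q m E)"
      using fire_count[OF less.prems(1) i(1) uncounted] by simp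
    moreover have "(\<Sum>j<d. x ! j - ?q ! j) < (\<Sum>j<d. x ! j - q ! j)"
    proof (rule sum_strict_mono_ex1)
      show "\<forall>j\<in>{..<d}. x ! j - ?q ! j \<le> x ! j - q ! j"
        using lq i by (auto simp: nth_list_update)
      show "\<exists>j\<in>{..<d}. x ! j - ?q ! j < x ! j - q ! j"
        using i lq by (intro bexI[of _ i]) auto
    qed simp
    ultimately show ?thesis
      using less.hyps consistent_count[OF less.prems(1) i(1) uncounted] less.prems(2) reachable_trans by blast
  qed
qed

lemma reaches_sub_step:
  assumes "t \<in> restr_idx" and "r \<in> RR t" and "enabled r (E t)"
  shows "reaches (conf x a b q m E) (conf x a b q m (E(t := fire r (E t))))"
proof -
  have "r_sub t r \<in> reactions"
    using assms(1,2) by (auto simp: reactions_def)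
  moreover have "enabled (r_sub t r) (conf x a b q m E)"
    using assms(1,3) by (simp add: enabled_sub_iff)
  ultimately have "reaches (conf x a b q m E) (fire (r_sub t r) (conf x a b q m E))"
    by (rule reachable_embed_fire)
  then show ?thesis
    by (simp add: fire_sub[OF assms(1)])
qed

lemma reaches_sub_run:
  assumes t: "t \<in> restr_idx" and run: "reachable (RR t) D D'"
    and agree: "\<forall>s. s \<noteq> YY t \<longrightarrow> D s = E t s"
  shows "\<exists>e. reaches (conf x a b q m E) (conf x a b q m (E(t := e)))
    \<and> (\<forall>s. s \<noteq> YY t \<longrightarrow> D' s = e s) \<and> e (YY t) + D (YY t) = E t (YY t) + D' (YY t)"
  using run[unfolded reachable_def]
proof (induction rule: rtranclp_induct)
  case base
  show ?case
    using agree reachable_refl by (intro exI[of _ "E t"]) auto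
next
  case (step D1 D2)
  then obtain e where e: "reaches (conf x a b q m E) (conf x a b q m (E(t := e)))"
    "\<forall>s. s \<noteq> YY t \<longrightarrow> D1 s = e s" "e (YY t) + D (YY t) = E t (YY t) + D1 (YY t)"
    by blast
  obtain r where r: "r \<in> RR t" "applicable r D1" "D2 = apply_rxn r D1"
    using step.hyps(2) unfolding step_def by blast
  have no_Y: "fst r (YY t) = 0"
    using sub_crn_facts(5)[OF t r(1)] .
  have "enabled r e"
    unfolding enabled_def
  proof
    show "fst r s \<le> e s" for s
      using r(2)[unfolded applicable_def, rule_format, of s] e(2)[rule_format, of s] no_Y
      by (cases "s = YY t") auto
  qed
  then have sub_step: "reaches (conf x a b q m (E(t := e))) (conf x a b q m (E(t := fire r e)))"
    using reaches_sub_step[OF t r(1), of "E(t := e)"] by simp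
  show ?case
  proof (intro exI[of _ "fire r e"] conjI allI impI)
    show "reaches (conf x a b q m E) (conf x a b q m (E(t := fire r e)))"
      using reachable_trans[OF e(1) sub_step] .
    show "D2 s = fire r e s" if "s \<noteq> YY t" for s
      using r(3) e(2) that by (simp add: apply_rxn_def fire_def)
    show "fire r e (YY t) + D (YY t) = E t (YY t) + D2 (YY t)"
      using r(3) e(3) no_Y by (simp add: apply_rxn_def fire_def)
  qed
qed

lemma reaches_sub_stable:
  assumes cons: "consistent x zeros True x m E" and t: "t \<in> restr_idx"
  shows "\<exists>e. reaches (conf x zeros True x m E) (conf x zeros True x m (E(t := e)))
     \<and> consistent x zeros True x m (E(t := e)) \<and> (active x t \<longrightarrow> e (YY t) + m = f_at t x)"
proof -
  have lx: "length x = d"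
    using cons by (simp add: consistent_def)
  have no_pending: "pending t zeros True s = 0" for s
    unfolding pending_def by (auto intro!: sum.neutral)
  have "tracks t x zeros True x m (E t)"
    using cons t unfolding consistent_def by blast
  then obtain D where D: "reachable (RR t) (initial_config d (XX t) (LL t) x) D"
      "\<forall>s. s \<noteq> YY t \<longrightarrow> D s = E t s" "active x t \<longrightarrow> D (YY t) = E t (YY t) + m"
    unfolding tracks_def no_pending by auto
  obtain Cf where Cf: "reachable (RR t) D Cf" "Cf (YY t) = f_at t x"
    using sub_crn_facts(1)[OF t] D(1) lx unfolding stably_computes_def by blast
  obtain e where e: "reaches (conf x zeros True x m E) (conf x zeros True x m (E(t := e)))"
     "\<forall>s. s \<noteq> YY t \<longrightarrow> Cf s = e s" "e (YY t) + D (YY t) = E t (YY t) + Cf (YY t)"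
    using reaches_sub_run[where E = E and x = x and a = zeros and b = True and q = x and m = m, OF t Cf(1) D(2)]
    by blast
  have "tracks t x zeros True x m e"
    unfolding tracks_def no_pending
    using reachable_trans[OF D(1) Cf(1)] e(2,3) D(3) by (intro exI[of _ Cf]) auto
  then have "consistent x zeros True x m (E(t := e))"
    using cons unfolding consistent_def by auto
  moreover have "active x t \<longrightarrow> e (YY t) + m = f_at t x"
    using e(3) D(3) Cf(2) by auto
  ultimately show ?thesis
    using e(1) by blast
qed

lemma reaches_subs_stable:
  assumes "finite U" and "U \<subseteq> restr_idx" and "consistent x zeros True x m E"
  shows "\<exists>E'. reaches (conf x zeros True x m E) (conf x zeros True x m E')
     \<and> consistent x zeros True x m E' \<and> (\<forall>t\<in>U. active x t \<longrightarrow> E' t (YY t) + m = f_at t x)"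
  using assms
proof (induction U rule: finite_induct)
  case empty
  then show ?case
    using reachable_refl by blast
next
  case (insert t U)
  then obtain E1 where E1: "reaches (conf x zeros True x m E) (conf x zeros True x m E1)"
    "consistent x zeros True x m E1" "\<forall>t\<in>U. active x t \<longrightarrow> E1 t (YY t) + m = f_at t x"
    by blast
  obtain e where e: "reaches (conf x zeros True x m E1) (conf x zeros True x m (E1(t := e)))"
    "consistent x zeros True x m (E1(t := e))" "active x t \<longrightarrow> e (YY t) + m = f_at t x"
    using reaches_sub_stable[OF E1(2)] insert.prems(1) by blast
  have "\<forall>t'\<in>insert t U. active x t' \<longrightarrow> (E1(t := e)) t' (YY t') + m = f_at t' x"
    using E1(3) e(3) by auto
  with reachable_trans[OF E1(1) e(1)] e(2) show ?case
    by blast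
qed

lemma f_le_output_when_blocked:
  assumes x: "length x = d" and subs: "\<forall>t\<in>restr_idx. active x t \<longrightarrow> E t (YY t) + m = f_at t x"
    and blocked: "\<not> ((\<forall>k<K. m < nat (g k (maxn x))) \<and> (\<forall>t\<in>restr_idx. active x t \<longrightarrow> 0 < E t (YY t)))"
  shows "f x \<le> m"
proof (cases "\<forall>k<K. m < nat (g k (maxn x))")
  case True
  with blocked obtain t where t: "t \<in> restr_idx" "active x t" "E t (YY t) = 0"
    by auto
  moreover from subs t(1,2) have "E t (YY t) + m = f_at t x"
    by blast
  ultimately have "m = f (x[fst t := snd t])"
    by (simp add: fix_input_def)
  moreover have "f x \<le> f (x[fst t := snd t])"
    using t x by (intro f_mono vle_list_update) (auto simp: active_def restr_idx_def)
  ultimately show ?thesis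
    by simp
next
  case False
  then obtain k where k: "k < K" "nat (g k (maxn x)) \<le> m"
    by auto
  have "int (f (maxn x)) \<le> g k (maxn x)"
    using f_le_g[OF k(1) _ vle_n_maxn] by simp
  moreover have "f x \<le> f (maxn x)"
    using f_mono[OF vle_maxn[OF x] x] .
  ultimately show ?thesis
    using k(2) by linarith
qed

lemma reaches_min_saturated:
  assumes "consistent x zeros True x m E" and "\<forall>t\<in>restr_idx. active x t \<longrightarrow> E t (YY t) + m = f_at t x"
  shows "\<exists>m' E'. reaches (conf x zeros True x m E) (conf x zeros True x m' E') \<and> f x \<le> m'"
  using assms
proof (induction "nat (g 0 (maxn x)) - m" arbitrary: m E rule: less_induct)
  case less
  have lx: "length x = d"
    using less.prems by (simp add: consistent_def)
  show ?case
  proof (cases "(\<forall>k<K. m < nat (g k (maxn x))) \<and> (\<forall>t\<in>restr_idx. active x t \<longrightarrow> 0 < E t (YY t))")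
    case True
    then have budget: "\<forall>k<K. m < nat (g k (maxn x))" and sub: "\<forall>t\<in>restr_idx. active x t \<longrightarrow> 0 < E t (YY t)"
      by blast+
    let ?E = "\<lambda>t s. E t s - (if active x t \<and> s = YY t then 1 else 0)"
    have "r_min (state_of x) \<in> reactions" and "enabled (r_min (state_of x)) (conf x zeros True x m E)"
      using state_of_in_states True by (simp_all add: reactions_def enabled_min_iff[OF lx])
    from reachable_embed_fire[OF this]
    have "reaches (conf x zeros True x m E) (conf x zeros True x (Suc m) ?E)"
      using fire_min[where E = E, OF budget sub] by simp
    moreover have "nat (g 0 (maxn x)) - Suc m < nat (g 0 (maxn x)) - m"
      using budget gs_nonempty by auto
    moreover have "\<forall>t\<in>restr_idx. active x t \<longrightarrow> ?E t (YY t) + Suc m = f_at t x"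
    proof (intro ballI impI)
      fix t assume "t \<in> restr_idx" and "active x t"
      with less.prems(2) sub have "0 < E t (YY t)" and "E t (YY t) + m = f_at t x"
        by blast+
      with \<open>active x t\<close> show "?E t (YY t) + Suc m = f_at t x"
        by simp
    qed
    ultimately show ?thesis
      using less.hyps consistent_min[OF less.prems(1) budget sub] reachable_trans by blast
  next
    case False
    with f_le_output_when_blocked[where E = E, OF lx less.prems(2)] show ?thesis
      using reachable_refl by blast
  qed
qed

lemma reaches_output_ge_f:
  assumes x: "length x = d" and cons: "consistent x a b q m E"
  shows "\<exists>m' E'. reaches (conf x a b q m E) (conf x zeros True x m' E') \<and> f x \<le> m'"
proof -
  obtain E1 where E1: "reaches (conf x a b q m E) (conf x a True q m E1)" "consistent x a True q m E1"
    using reaches_started[OF cons] by blast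
  obtain E2 where E2: "reaches (conf x a True q m E1) (conf x zeros True q m E2)"
      "consistent x zeros True q m E2"
    using reaches_inputs_split[OF E1(2)] by blast
  have E3: "reaches (conf x zeros True q m E2) (conf x zeros True x m E2)" "consistent x zeros True x m E2"
    using reaches_counted[OF E2(2) x] by blast+
  obtain E4 where E4: "reaches (conf x zeros True x m E2) (conf x zeros True x m E4)"
      "consistent x zeros True x m E4" "\<forall>t\<in>restr_idx. active x t \<longrightarrow> E4 t (YY t) + m = f_at t x"
    using reaches_subs_stable[OF finite_restr_idx subset_refl E3(2)] by blast
  obtain m' E5 where "reaches (conf x zeros True x m E4) (conf x zeros True x m' E5)" "f x \<le> m'"
    using reaches_min_saturated[OF E4(2,3)] by blast
  with E1(1) E2(1) E3(1) E4(1) show ?thesis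
    by (meson reachable_trans)
qed

definition used_species :: "species set" where
  "used_species = Input ` {..<d} \<union> {Output, Leader} \<union> Counter ` {..<d} \<union> Budget ` {..<K}
     \<union> State ` states \<union> (\<Union>t\<in>restr_idx. Sub t ` SS t)"

lemma used_speciesI:
  "i < d \<Longrightarrow> Input i \<in> used_species" "Output \<in> used_species" "Leader \<in> used_species"
  "i < d \<Longrightarrow> Counter i \<in> used_species" "k < K \<Longrightarrow> Budget k \<in> used_species"
  "w \<in> states \<Longrightarrow> State w \<in> used_species"
  "t \<in> restr_idx \<Longrightarrow> s \<in> SS t \<Longrightarrow> Sub t s \<in> used_species"
  by (auto simp: used_species_def)

lemma r_sub_support:
  "fst (r_sub t r) s \<noteq> 0 \<or> snd (r_sub t r) s \<noteq> 0 \<Longrightarrow>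
    \<exists>s'. s = Sub t s' \<and> (fst r s' \<noteq> 0 \<or> snd r s' \<noteq> 0)"
  by (cases s) (auto simp: r_sub_def split: if_splits)

lemma reaction_support:
  assumes "r \<in> reactions" and "fst r s \<noteq> 0 \<or> snd r s \<noteq> 0"
  shows "s \<in> used_species"
  using assms(1)
proof (cases rule: reactions_cases)
  case start
  with assms(2) show ?thesis
    by (cases s) (simp_all add: r_start_def used_speciesI state_of_in_states sub_crn_facts(9) split: if_splits)
next
  case (split i)
  with assms(2) show ?thesis
    by (cases s) (simp_all add: r_split_def used_speciesI sub_crn_facts(7) split: if_splits)
next
  case (count w i)
  with assms(2) show ?thesis
    by (cases s) (simp_all add: r_count_def used_speciesI state_step_in_states split: if_splits)
next
  case (min w)
  with assms(2) show ?thesis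
    by (cases s) (simp_all add: r_min_def used_speciesI sub_crn_facts(8) split: if_splits)
next
  case (sub t r')
  from assms(2)[unfolded sub(3)] have "\<exists>s'. s = Sub t s' \<and> (fst r' s' \<noteq> 0 \<or> snd r' s' \<noteq> 0)"
    by (rule r_sub_support)
  then obtain s' where s: "s = Sub t s'" and nonzero: "fst r' s' \<noteq> 0 \<or> snd r' s' \<noteq> 0"
    by blast
  have "s' \<in> SS t"
    using sub_crn_facts(6)[OF sub(1,2)] nonzero unfolding supported_in_def by auto
  with s sub(1) show ?thesis
    by (simp add: used_speciesI)
qed

lemma reactions_output_free:
  assumes "r \<in> reactions"
  shows "fst r Output = 0"
  using assms by (cases rule: reactions_cases) (auto simp: r_start_def r_split_def r_count_def r_min_def r_sub_def)

theorem obliviously_computable: "obliviously_computable d f"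
proof (rule obliviously_computable_embed[where A = used_species and Rs = reactions and X = Input
      and Y = Output and L = Leader])
  show "finite used_species"
    using finite_states finite_restr_idx sub_crn_facts(3) by (simp add: used_species_def)
  show "finite reactions"
    using finite_states finite_restr_idx sub_crn_facts(4) by (simp add: reactions_def)
  show "Input ` {..<d} \<subseteq> used_species" "Output \<in> used_species" "Leader \<in> used_species"
    by (auto simp: used_speciesI)
  show "inj_on Input {..<d}" "Output \<noteq> Leader" "Output \<notin> Input ` {..<d}" "Leader \<notin> Input ` {..<d}"
    by (auto simp: inj_on_def)
  show "\<And>r s. r \<in> reactions \<Longrightarrow> fst r s \<noteq> 0 \<or> snd r s \<noteq> 0 \<Longrightarrow> s \<in> used_species"
    by (rule reaction_support)
  show "\<And>r. r \<in> reactions \<Longrightarrow> fst r Output = 0"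
    by (rule reactions_output_free)
  fix x C assume x: "length x = d" and C: "reachable crn (initial x) C"
  show "\<exists>Cf. reachable crn C Cf \<and> stable crn (to_nat Output) Cf \<and> Cf (to_nat Output) = f x"
  proof (rule output_oblivious_stable_output[OF _ _ _ C])
    show "output_oblivious crn (to_nat Output)"
      using reactions_output_free by (auto simp: output_oblivious_def embed_reaction_def)
    show "D (to_nat Output) \<le> f x" if "reachable crn (initial x) D" for D
      using output_le_f[OF x] by (rule reachable_consistent[OF x that]) (simp add: conf_def)
    obtain a b q m E where "consistent x a b q m E" and "C = embed_config (conf x a b q m E)"
      using reachable_consistent[OF x C] .
    then show "\<exists>D. reachable crn C D \<and> f x \<le> D (to_nat Output)"
      using reaches_output_ge_f[OF x] by (fastforce simp: conf_def)
  qed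
qed

end

theorem lemma15:
  fixes d :: nat and f :: "nat list \<Rightarrow> nat"
  assumes mono: "nondecreasing d f"
    and minq: "\<exists>gs :: (nat list \<Rightarrow> int) list. \<exists>n :: nat list.
                 gs \<noteq> [] \<and> (\<forall>g\<in>set gs. quilt_affine d g) \<and> length n = d \<and>
                 (\<forall>x. length x = d \<longrightarrow> vle n x \<longrightarrow> int (f x) = Min ((\<lambda>g. g x) ` set gs))"
    and restr: "\<forall>i<d. \<forall>j::nat. obliviously_computable d (fix_input f i j)"
  shows "obliviously_computable d f"
proof -
  obtain gs :: "(nat list \<Rightarrow> int) list" and n :: "nat list" where
    gs: "gs \<noteq> []" "\<forall>g\<in>set gs. quilt_affine d g" and n: "length n = d"
    and f_min: "\<forall>x. length x = d \<longrightarrow> vle n x \<longrightarrow> int (f x) = Min ((\<lambda>g. g x) ` set gs)"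
    using minq by blast
  obtain P where "P > 0" and periodic: "\<forall>g\<in>set gs. periodic_increments d g P"
    using quilt_affine_common_period[OF finite_set gs(2)] .
  have "\<forall>t\<in>{t. fst t < d}. obliviously_computable d (fix_input f (fst t) (snd t))"
    using restr by simp
  then obtain SS RR XX YY LL where "\<And>t. t \<in> {t. fst t < d} \<Longrightarrow>
      stably_computes (SS t) (RR t) d (XX t) (YY t) (LL t) (fix_input f (fst t) (snd t))
      \<and> output_oblivious (RR t) (YY t)"
    by (rule obliviously_computable_choice) blast
  then have "min_quilt_crn d f gs n P SS RR XX YY LL"
    using gs n f_min periodic \<open>P > 0\<close> mono by unfold_locales (auto simp: quilt_affine_def)
  then show ?thesis
    by (rule min_quilt_crn.obliviously_computable)
qed

end
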